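(* Let $\mathcal{S}$ be a state space, let $\mathcal{A}\subset\mathbb{R}^d$ be an action space of finite positive Lebesgue measure, let $R:\mathcal{S}\times\mathcal{A}\to\mathbb{R}$ be a reward function, let $\tau(\cdot\mid s,a)$ be a transition kernel, and let $\gamma\in(0,1)$ and $\tilde{\alpha}>0$. Let $\mathcal{Q}$ be a probability distribution over (measurable) functions $Q:\mathcal{S}\times\mathcal{A}\to\mathbb{R}$ such that for every state-action pair $(s,a)$ the random variable $Q(s,a)$, $Q\sim\mathcal{Q}$, has bounded support and is sub-Gaussian with mean $\mu(s,a)$ and variance proxy $\sigma^2(s,a)$. Define the (one-step distributional soft) Bellman optimality backup, for a given next state $s'\sim\tau(\cdot\mid s,a)$, by $$\mathcal{T}^{*}Q(s,a)=R(s,a)+\gamma\,\mathbb{E}_{Q\sim\mathcal{Q}}\Big[\tilde{\alpha}\log\Big(\int_{\mathcal{A}}\exp\big(\tilde{\alpha}^{-1}Q(s',a')\big)\,da'\Big)\Big].$$ Then for every $(s,a)$ and every next state $s'$, $$\mathcal{T}^{*}Q(s,a)\le R(s,a)+\gamma\,\tilde{\alpha}\log\Big(\int_{\mathcal{A}}\exp\Big(\tilde{\alpha}^{-1}\mu(s',a')+\tfrac12\tilde{\alpha}^{-2}\sigma^2(s',a')\Big)\,da'\Big).$$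
   Context: A real random variable $X$ with mean $\mu=\mathbb{E}[X]$ is called sub-Gaussian with variance proxy $\sigma^2$ if $\mathbb{E}[\exp(\lambda X)]\le\exp(\lambda\mu+\tfrac12\lambda^2\sigma^2)$ for all $\lambda\in\mathbb{R}$. The functions $\mu(s,a)=\mathbb{E}_{Q\sim\mathcal{Q}}[Q(s,a)]$ and $\sigma^2(s,a)$ are assumed measurable in $a$. *)

theory Defs
  imports "HOL-Probability.Probability"
begin

definition subgaussian :: "'w measure \<Rightarrow> ('w \<Rightarrow> real) \<Rightarrow> real \<Rightarrow> bool" where
  "subgaussian M X v \<longleftrightarrow>
     (\<forall>l::real. (\<integral>\<omega>. exp (l * X \<omega>) \<partial>M) \<le> exp (l * (\<integral>\<omega>. X \<omega> \<partial>M) + l\<^sup>2 * v / 2))"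

text \<open>Mean function mu(s,a) = E_{Q ~ Q-distribution}[Q(s,a)]. The distribution over
Q-functions is represented by a probability space M and a random Q-function Q omega.\<close>
definition qmean :: "'w measure \<Rightarrow> ('w \<Rightarrow> 's \<Rightarrow> 'a \<Rightarrow> real) \<Rightarrow> 's \<Rightarrow> 'a \<Rightarrow> real" where
  "qmean M Q s a = (\<integral>\<omega>. Q \<omega> s a \<partial>M)"

definition soft_backup ::
  "'w measure \<Rightarrow> ('w \<Rightarrow> 's \<Rightarrow> 'a::euclidean_space \<Rightarrow> real) \<Rightarrow> ('s \<Rightarrow> 'a \<Rightarrow> real)
    \<Rightarrow> real \<Rightarrow> real \<Rightarrow> 'a set \<Rightarrow> 's \<Rightarrow> 'a \<Rightarrow> 's \<Rightarrow> real" where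
  "soft_backup M Q R \<gamma> \<alpha> A s a s' =
     R s a + \<gamma> * (\<integral>\<omega>. \<alpha> * ln (set_lebesgue_integral lborel A (\<lambda>a'. exp (Q \<omega> s' a' / \<alpha>))) \<partial>M)"

end

theory Submission
  imports Defs
begin

text \<open>Let \<open>Z(\<omega>) = \<integral>\<^sub>A exp (Q\<^sub>\<omega>(s',a') / \<alpha>) da'\<close>. Since \<open>ln\<close> is concave, Jensen's inequality
gives \<open>E[ln Z] \<le> ln E[Z]\<close>. By Tonelli, \<open>E[Z] = \<integral>\<^sub>A E[exp (Q(s',a') / \<alpha>)] da'\<close>, and the
sub-Gaussian moment bound at \<open>\<lambda> = 1/\<alpha>\<close> bounds the integrand by
\<open>exp (\<mu>(s',a') / \<alpha> + \<sigma>\<^sup>2(s',a') / (2\<alpha>\<^sup>2))\<close>. Monotonicity of \<open>ln\<close> and \<open>\<gamma>\<alpha> > 0\<close> finish the proof.\<close>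

lemma (in finite_measure) integrable_exp_of_AE_bounded:
  fixes X :: "'a \<Rightarrow> real"
  assumes [measurable]: "X \<in> borel_measurable M" and bounded: "AE \<omega> in M. \<bar>X \<omega>\<bar> \<le> B"
  shows "integrable M (\<lambda>\<omega>. exp (c * X \<omega>))"
proof (rule integrable_const_bound)
  show "AE \<omega> in M. norm (exp (c * X \<omega>)) \<le> exp (\<bar>c\<bar> * B)"
    using bounded
  proof eventually_elim
    case (elim \<omega>)
    have "c * X \<omega> \<le> \<bar>c\<bar> * \<bar>X \<omega>\<bar>" by (simp add: abs_mult[symmetric])
    also have "\<dots> \<le> \<bar>c\<bar> * B" using elim by (simp add: mult_left_mono)
    finally show ?case by simp
  qed
qed measurable

lemma set_integral_pos:
  fixes f :: "'a \<Rightarrow> real"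
  assumes A: "A \<in> sets M" "0 < emeasure M A"
    and f: "set_integrable M A f" and pos: "\<And>x. x \<in> A \<Longrightarrow> 0 < f x"
  shows "0 < set_lebesgue_integral M A f"
proof -
  have nonneg: "AE x in M. 0 \<le> indicator A x * f x"
    using pos by (intro AE_I2) (simp add: indicator_def less_imp_le)
  have "set_lebesgue_integral M A f \<noteq> 0"
  proof
    assume "set_lebesgue_integral M A f = 0"
    then have "AE x in M. indicator A x * f x = 0"
      using f nonneg unfolding set_lebesgue_integral_def set_integrable_def
      by (simp add: integral_nonneg_eq_0_iff_AE)
    then have "AE x in M. x \<notin> A"
      by eventually_elim (use pos in \<open>fastforce simp: indicator_def\<close>)
    moreover have "{x \<in> space M. \<not> x \<notin> A} = A"
      using sets.sets_into_space[OF A(1)] by auto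
    ultimately show False
      using A AE_iff_measurable[of A M "\<lambda>x. x \<notin> A"] by simp
  qed
  moreover have "0 \<le> set_lebesgue_integral M A f"
    using nonneg unfolding set_lebesgue_integral_def by (simp add: integral_nonneg_AE)
  ultimately show ?thesis by simp
qed

lemma (in pair_sigma_finite) integrable_pair_and_integral_le:
  fixes f :: "'a \<Rightarrow> 'b \<Rightarrow> real" and g :: "'b \<Rightarrow> real"
  assumes f[measurable]: "case_prod f \<in> borel_measurable (M1 \<Otimes>\<^sub>M M2)"
    and nonneg: "\<And>x y. 0 \<le> f x y"
    and fiber: "\<And>y. y \<in> space M2 \<Longrightarrow> integrable M1 (\<lambda>x. f x y)"
    and bound: "\<And>y. y \<in> space M2 \<Longrightarrow> (\<integral>x. f x y \<partial>M1) \<le> g y"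
    and g: "integrable M2 g"
  shows "integrable (M1 \<Otimes>\<^sub>M M2) (case_prod f)"
    and "(\<integral>x. (\<integral>y. f x y \<partial>M2) \<partial>M1) \<le> (\<integral>y. g y \<partial>M2)"
proof -
  have "(\<integral>\<^sup>+z. case_prod f z \<partial>(M1 \<Otimes>\<^sub>M M2)) = (\<integral>\<^sup>+y. (\<integral>\<^sup>+x. f x y \<partial>M1) \<partial>M2)"
    by (simp add: nn_integral_snd[symmetric])
  also have "\<dots> = (\<integral>\<^sup>+y. ennreal (\<integral>x. f x y \<partial>M1) \<partial>M2)"
    using fiber nonneg by (intro nn_integral_cong nn_integral_eq_integral) auto
  also have "\<dots> \<le> (\<integral>\<^sup>+y. norm (g y) \<partial>M2)"
    using bound by (intro nn_integral_mono ennreal_leI) force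
  also have "\<dots> < \<infinity>"
    using g by (simp add: integrable_iff_bounded)
  finally show int: "integrable (M1 \<Otimes>\<^sub>M M2) (case_prod f)"
    using nonneg by (intro integrableI_nonneg) auto
  have "(\<integral>x. (\<integral>y. f x y \<partial>M2) \<partial>M1) = (\<integral>y. (\<integral>x. f x y \<partial>M1) \<partial>M2)"
    using Fubini_integral[OF int] ..
  also have "\<dots> \<le> (\<integral>y. g y \<partial>M2)"
  proof (rule integral_mono'[OF g bound])
    show "0 \<le> g y" if "y \<in> space M2" for y
      by (intro order_trans[OF _ bound[OF that]] integral_nonneg_AE AE_I2 nonneg)
  qed
  finally show "(\<integral>x. (\<integral>y. f x y \<partial>M2) \<partial>M1) \<le> (\<integral>y. g y \<partial>M2)" .
qed

lemma (in prob_space) expectation_ln_le_ln_expectation: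
  fixes X :: "'a \<Rightarrow> real"
  assumes X: "integrable M X" "AE \<omega> in M. 0 < X \<omega>"
    and lnX: "integrable M (\<lambda>\<omega>. ln (X \<omega>))"
  shows "expectation (\<lambda>\<omega>. ln (X \<omega>)) \<le> ln (expectation X)"
proof -
  have "- ln (expectation X) \<le> expectation (\<lambda>\<omega>. - ln (X \<omega>))"
  proof (rule jensens_inequality[where q="\<lambda>x. - ln x" and I="{0<..}" and a=0 and b=0])
    show "convex_on {0<..} (\<lambda>x. - ln x)"
      using ln_concave unfolding concave_on_def by simp
  qed (use X lnX in auto)
  then show ?thesis by simp
qed

lemma subgaussian_integral_exp_div_le:
  assumes "subgaussian M X v"
  shows "(\<integral>\<omega>. exp (X \<omega> / \<alpha>) \<partial>M) \<le> exp ((\<integral>\<omega>. X \<omega> \<partial>M) / \<alpha> + (1/2) * \<alpha> powi (-2) * v)"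
proof -
  have "(\<integral>\<omega>. exp ((1/\<alpha>) * X \<omega>) \<partial>M) \<le> exp ((1/\<alpha>) * (\<integral>\<omega>. X \<omega> \<partial>M) + (1/\<alpha>)\<^sup>2 * v / 2)"
    using assms unfolding subgaussian_def by blast
  then show ?thesis
    by (simp add: power_int_minus inverse_eq_divide power_one_over mult.commute)
qed

lemma (in prob_space) expectation_set_integral_exp_le:
  fixes Q :: "'a \<Rightarrow> 'b \<Rightarrow> real" and v :: "'b \<Rightarrow> real"
  assumes N: "sigma_finite_measure N" and A[measurable]: "A \<in> sets N"
    and Q_meas[measurable]: "(\<lambda>(\<omega>, x). Q \<omega> x) \<in> borel_measurable (M \<Otimes>\<^sub>M N)"
    and Q_bdd: "\<And>x. \<exists>B. AE \<omega> in M. \<bar>Q \<omega> x\<bar> \<le> B"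
    and Q_subg: "\<And>x. subgaussian M (\<lambda>\<omega>. Q \<omega> x) (v x)"
    and G: "set_integrable N A (\<lambda>x. exp ((\<integral>\<omega>. Q \<omega> x \<partial>M) / \<alpha> + (1/2) * \<alpha> powi (-2) * v x))"
  shows "integrable (M \<Otimes>\<^sub>M N) (\<lambda>(\<omega>, x). indicator A x * exp (Q \<omega> x / \<alpha>))"
    and "(\<integral>\<omega>. set_lebesgue_integral N A (\<lambda>x. exp (Q \<omega> x / \<alpha>)) \<partial>M)
      \<le> set_lebesgue_integral N A (\<lambda>x. exp ((\<integral>\<omega>. Q \<omega> x \<partial>M) / \<alpha> + (1/2) * \<alpha> powi (-2) * v x))"
proof -
  interpret pair_sigma_finite M N
    using N by (simp add: pair_sigma_finite_def sigma_finite_measure_axioms)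
  define f where "f \<omega> x = indicator A x * exp (Q \<omega> x / \<alpha>)" for \<omega> x
  define g where "g x = indicator A x * exp ((\<integral>\<omega>. Q \<omega> x \<partial>M) / \<alpha> + (1/2) * \<alpha> powi (-2) * v x)" for x
  have fiberwise: "integrable M (\<lambda>\<omega>. f \<omega> x) \<and> (\<integral>\<omega>. f \<omega> x \<partial>M) \<le> g x"
    if "x \<in> space N" for x
  proof -
    have "(\<lambda>\<omega>. Q \<omega> x) \<in> borel_measurable M"
      using that by measurable
    moreover obtain B where "AE \<omega> in M. \<bar>Q \<omega> x\<bar> \<le> B"
      using Q_bdd by blast
    ultimately have "integrable M (\<lambda>\<omega>. exp (1 / \<alpha> * Q \<omega> x))"
      by (rule integrable_exp_of_AE_bounded)
    then show ?thesis
      using subgaussian_integral_exp_div_le[OF Q_subg, of x \<alpha>]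
      unfolding f_def g_def by (cases "x \<in> A") auto
  qed
  have "case_prod f \<in> borel_measurable (M \<Otimes>\<^sub>M N)"
    unfolding f_def by measurable
  from integrable_pair_and_integral_le[OF this _ _ _ G[unfolded set_integrable_def]] fiberwise
  show "integrable (M \<Otimes>\<^sub>M N) (\<lambda>(\<omega>, x). indicator A x * exp (Q \<omega> x / \<alpha>))"
    and "(\<integral>\<omega>. set_lebesgue_integral N A (\<lambda>x. exp (Q \<omega> x / \<alpha>)) \<partial>M)
      \<le> set_lebesgue_integral N A (\<lambda>x. exp ((\<integral>\<omega>. Q \<omega> x \<partial>M) / \<alpha> + (1/2) * \<alpha> powi (-2) * v x))"
    unfolding f_def g_def set_lebesgue_integral_def by auto
qed

theorem theorem1:
  fixes M :: "'w measure"
    and Q :: "'w \<Rightarrow> 's \<Rightarrow> real ^ 'd \<Rightarrow> real"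
    and A :: "(real ^ 'd) set"
    and R :: "'s \<Rightarrow> real ^ 'd \<Rightarrow> real"
    and \<sigma>2 :: "'s \<Rightarrow> real ^ 'd \<Rightarrow> real"
    and \<gamma> \<alpha> :: real
    and s s' :: 's and a :: "real ^ 'd"
  assumes A_meas: "A \<in> sets lborel"
    and A_pos: "0 < emeasure lborel A" and A_fin: "emeasure lborel A < \<infinity>"
    and gamma: "0 < \<gamma>" "\<gamma> < 1"
    and alpha: "0 < \<alpha>"
    and M: "prob_space M"
    and Q_meas: "\<And>t. (\<lambda>(\<omega>, x). Q \<omega> t x) \<in> borel_measurable (M \<Otimes>\<^sub>M lborel)"
    and Q_bdd: "\<And>t x. \<exists>B. AE \<omega> in M. \<bar>Q \<omega> t x\<bar> \<le> B"
    and Q_subg: "\<And>t x. subgaussian M (\<lambda>\<omega>. Q \<omega> t x) (\<sigma>2 t x)"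
    and sigma_meas: "\<And>t. \<sigma>2 t \<in> borel_measurable lborel"
    and backup_welldef: "integrable M (\<lambda>\<omega>. ln (set_lebesgue_integral lborel A (\<lambda>a'. exp (Q \<omega> s' a' / \<alpha>))))"
    and rhs_finite: "set_integrable lborel A
          (\<lambda>a'. exp (qmean M Q s' a' / \<alpha> + (1/2) * \<alpha> powi (-2) * \<sigma>2 s' a'))"
  shows "soft_backup M Q R \<gamma> \<alpha> A s a s'
    \<le> R s a + \<gamma> * \<alpha> * ln (set_lebesgue_integral lborel A
          (\<lambda>a'. exp (qmean M Q s' a' / \<alpha> + (1/2) * \<alpha> powi (-2) * \<sigma>2 s' a')))"
proof -
  interpret prob_space M by (rule M)
  interpret pair_sigma_finite M lborel ..
  define F where "F \<omega> = set_lebesgue_integral lborel A (\<lambda>x. exp (Q \<omega> s' x / \<alpha>))" for \<omega>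
  define G where "G x = exp (qmean M Q s' x / \<alpha> + (1/2) * \<alpha> powi (-2) * \<sigma>2 s' x)" for x
  note bound = expectation_set_integral_exp_le[OF lborel.sigma_finite_measure_axioms A_meas
      Q_meas Q_bdd Q_subg rhs_finite[unfolded qmean_def]]
  have F_int: "integrable M F"
    using integrable_fst'[OF bound(1)] unfolding F_def set_lebesgue_integral_def by simp
  have F_pos: "AE \<omega> in M. 0 < F \<omega>"
    using AE_integrable_fst'[OF bound(1)]
    by eventually_elim (auto simp: F_def set_integrable_def intro!: set_integral_pos A_meas A_pos)
  have "(\<integral>\<omega>. ln (F \<omega>) \<partial>M) \<le> ln (\<integral>\<omega>. F \<omega> \<partial>M)"
    using F_int F_pos backup_welldef unfolding F_def by (rule expectation_ln_le_ln_expectation)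
  also have "\<dots> \<le> ln (set_lebesgue_integral lborel A G)"
    using bound(2) expectation_greater[OF F_int F_pos] unfolding F_def G_def qmean_def by simp
  finally show ?thesis
    using gamma alpha unfolding soft_backup_def F_def G_def by (simp add: mult_left_mono mult.assoc)
qed

end
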